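(* If a graph $G$ has $n\ge 1$ vertices, then $m(G)\le \lceil n/3\rceil+1$.
   Context: All graphs are finite, simple and undirected. A list assignment $L$ for a graph $G$ assigns to each vertex $v$ a set $L(v)$ of colors; an $L$-coloring is a proper vertex coloring $c$ of $G$ with $c(v)\in L(v)$ for every vertex $v$. A $k$-list assignment is a list assignment with $|L(v)|=k$ for all $v$. $G$ is uniquely $k$-list colorable (U$k$LC) if there exists a $k$-list assignment $L$ such that $G$ has exactly one $L$-coloring. $G$ has property $M(k)$ if it is not U$k$LC, i.e. for every $k$-list assignment $L$, $G$ has either no $L$-coloring or at least two $L$-colorings. The m-number $m(G)$ is the least integer $k\ge 1$ such that $G$ has property $M(k)$. (Every U$k$LC graph is also U$(k-1)$LC, so $G$ is U$k$LC iff $k<m(G)$.) *)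

theory Defs
  imports Complex_Main
begin

definition simple_graph :: "'a set \<Rightarrow> ('a \<Rightarrow> 'a \<Rightarrow> bool) \<Rightarrow> bool" where
  "simple_graph V E \<longleftrightarrow> finite V \<and>
     (\<forall>u v. E u v \<longrightarrow> u \<in> V \<and> v \<in> V \<and> u \<noteq> v \<and> E v u)"

text \<open>Colours are natural numbers (the graph is finite, so countably many
  colours are enough).\<close>
definition k_list_assignment :: "'a set \<Rightarrow> ('a \<Rightarrow> nat set) \<Rightarrow> nat \<Rightarrow> bool" where
  "k_list_assignment V L k \<longleftrightarrow> (\<forall>v\<in>V. finite (L v) \<and> card (L v) = k)"

definition L_coloring :: "'a set \<Rightarrow> ('a \<Rightarrow> 'a \<Rightarrow> bool) \<Rightarrow> ('a \<Rightarrow> nat set) \<Rightarrow> ('a \<Rightarrow> nat) \<Rightarrow> bool" where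
  "L_coloring V E L c \<longleftrightarrow> (\<forall>v\<in>V. c v \<in> L v) \<and> (\<forall>u\<in>V. \<forall>v\<in>V. E u v \<longrightarrow> c u \<noteq> c v)"

definition unique_L_coloring :: "'a set \<Rightarrow> ('a \<Rightarrow> 'a \<Rightarrow> bool) \<Rightarrow> ('a \<Rightarrow> nat set) \<Rightarrow> bool" where
  "unique_L_coloring V E L \<longleftrightarrow>
     (\<exists>c. L_coloring V E L c \<and> (\<forall>c'. L_coloring V E L c' \<longrightarrow> (\<forall>v\<in>V. c' v = c v)))"

definition UkLC :: "'a set \<Rightarrow> ('a \<Rightarrow> 'a \<Rightarrow> bool) \<Rightarrow> nat \<Rightarrow> bool" where
  "UkLC V E k \<longleftrightarrow> (\<exists>L. k_list_assignment V L k \<and> unique_L_coloring V E L)"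

definition property_M :: "'a set \<Rightarrow> ('a \<Rightarrow> 'a \<Rightarrow> bool) \<Rightarrow> nat \<Rightarrow> bool" where
  "property_M V E k \<longleftrightarrow> \<not> UkLC V E k"

definition m_number :: "'a set \<Rightarrow> ('a \<Rightarrow> 'a \<Rightarrow> bool) \<Rightarrow> nat" where
  "m_number V E = (LEAST k. 1 \<le> k \<and> property_M V E k)"

end

theory Submission
  imports Defs
begin

text \<open>Let \<open>c\<close> be the unique \<open>L\<close>-coloring of a graph on \<open>n\<close> vertices. Recoloring a single
  vertex \<open>v\<close> with another color of \<open>L(v)\<close> must fail, so all lists consist of colors used by \<open>c\<close>.
  Moreover, in every nonempty set \<open>T\<close> of used colors some color class cannot be moved as a whole
  to another color of \<open>T\<close>: otherwise a fixed-point-free self-map of \<open>T\<close> has a cycle, and rotating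
  the colors along it yields a second \<open>L\<close>-coloring. Applying this to the color classes with one
  and with two vertices bounds the number of colors a list can draw from, which gives
  \<open>3k \<le> n + 2\<close>; hence no \<open>k\<close>-list assignment with \<open>k = \<lceil>n/3\<rceil> + 1\<close> has a unique coloring.\<close>

lemma finite_endomap_invariant_subset:
  assumes "finite T" "T \<noteq> {}" "g ` T \<subseteq> T"
  shows "\<exists>P\<subseteq>T. P \<noteq> {} \<and> g ` P = P"
  using assms
proof (induction "card T" arbitrary: T rule: less_induct)
  case less
  show ?case
  proof (cases "g ` T = T")
    case True
    then show ?thesis using less.prems(2) by (intro exI[of _ T]) simp
  next
    case False
    then have "g ` T \<subset> T" using less.prems(3) by blast
    then have "card (g ` T) < card T" using less.prems(1) by (simp add: psubset_card_mono)
    moreover have "finite (g ` T)" "g ` T \<noteq> {}" using less.prems(1,2) by simp_all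
    moreover have "g ` g ` T \<subseteq> g ` T" using less.prems(3) by (rule image_mono)
    ultimately have "\<exists>P\<subseteq>g ` T. P \<noteq> {} \<and> g ` P = P"
      by (rule less.hyps)
    then obtain P where "P \<subseteq> g ` T" "P \<noteq> {}" "g ` P = P" by blast
    moreover have "P \<subseteq> T" using \<open>P \<subseteq> g ` T\<close> less.prems(3) by (rule subset_trans)
    ultimately show ?thesis by blast
  qed
qed

lemma inj_extend_by_id:
  assumes "finite P" "g ` P = P"
  shows "inj (\<lambda>x. if x \<in> P then g x else x)"
proof (rule injI)
  have "inj_on g P" using assms by (simp add: finite_surj_inj)
  fix x y assume "(if x \<in> P then g x else x) = (if y \<in> P then g y else y)"
  then show "x = y" using \<open>inj_on g P\<close> assms(2) by (auto simp: inj_on_def split: if_splits)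
qed

locale unique_list_coloring =
  fixes V :: "'a set" and E :: "'a \<Rightarrow> 'a \<Rightarrow> bool"
    and L :: "'a \<Rightarrow> nat set" and c :: "'a \<Rightarrow> nat"
  assumes graph: "simple_graph V E"
    and coloring: "L_coloring V E L c"
    and unique: "\<And>c' v. L_coloring V E L c' \<Longrightarrow> v \<in> V \<Longrightarrow> c' v = c v"
begin

definition color_class :: "nat \<Rightarrow> 'a set" where
  "color_class a = {v \<in> V. c v = a}"

definition class_recolorable :: "nat \<Rightarrow> nat \<Rightarrow> bool" where
  "class_recolorable a b \<longleftrightarrow> (\<forall>v\<in>color_class a. b \<in> L v)"

lemma finite_vertices: "finite V"
  using graph unfolding simple_graph_def by blast

lemma finite_color_class: "finite (color_class a)"
  using finite_vertices by (simp add: color_class_def)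

lemma color_in_list: "v \<in> V \<Longrightarrow> c v \<in> L v"
  using coloring by (simp add: L_coloring_def)

lemma neighbor_has_list_color:
  assumes v: "v \<in> V" and b: "b \<in> L v" "b \<noteq> c v"
  shows "\<exists>u\<in>V. E v u \<and> c u = b"
proof (rule ccontr)
  assume no_nb: "\<not> (\<exists>u\<in>V. E v u \<and> c u = b)"
  have "L_coloring V E L (c(v := b))"
    unfolding L_coloring_def
  proof (intro conjI ballI impI)
    fix w assume "w \<in> V"
    then show "(c(v := b)) w \<in> L w" using b color_in_list by simp
  next
    fix u w assume uw: "u \<in> V" "w \<in> V" "E u w"
    then have "u \<noteq> w" "E w u" using graph unfolding simple_graph_def by blast+
    then consider "u = v" "w \<noteq> v" | "w = v" "u \<noteq> v" | "u \<noteq> v" "w \<noteq> v" by blast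
    then show "(c(v := b)) u \<noteq> (c(v := b)) w"
    proof cases
      case 1
      then have "c w \<noteq> b" using no_nb uw by blast
      then show ?thesis using 1 by simp
    next
      case 2
      then have "c u \<noteq> b" using no_nb uw \<open>E w u\<close> by blast
      then show ?thesis using 2 by simp
    next
      case 3
      then show ?thesis using coloring uw by (simp add: L_coloring_def)
    qed
  qed
  then have "(c(v := b)) v = c v" using v by (rule unique)
  then show False using b(2) by simp
qed

lemma list_subset_used_colors:
  assumes "v \<in> V" shows "L v \<subseteq> c ` V"
proof
  fix b assume "b \<in> L v"
  show "b \<in> c ` V"
  proof (cases "b = c v")
    case True
    then show ?thesis using assms by simp
  next
    case False
    then show ?thesis using neighbor_has_list_color[OF assms \<open>b \<in> L v\<close>] by force
  qed
qed

text \<open>If every class of \<open>T\<close> could move to another color of \<open>T\<close>, choose such a move \<open>g\<close>; on a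
  nonempty \<open>g\<close>-invariant \<open>P \<subseteq> T\<close> it is a fixed-point-free permutation, and applying it to the
  colors of \<open>c\<close> gives a different \<open>L\<close>-coloring.\<close>
lemma exists_unrecolorable_class:
  assumes T: "finite T" "T \<noteq> {}" "T \<subseteq> c ` V"
  shows "\<exists>a\<in>T. \<forall>b\<in>T. class_recolorable a b \<longrightarrow> b = a"
proof (rule ccontr)
  assume "\<not> ?thesis"
  then have "\<forall>a\<in>T. \<exists>b. b \<in> T \<and> b \<noteq> a \<and> class_recolorable a b" by blast
  from bchoice[OF this] obtain g
    where g: "\<forall>a\<in>T. g a \<in> T \<and> g a \<noteq> a \<and> class_recolorable a (g a)"
    by blast
  then have "g ` T \<subseteq> T" by blast
  obtain P where P: "P \<subseteq> T" "P \<noteq> {}" "g ` P = P"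
    using finite_endomap_invariant_subset[OF T(1,2) \<open>g ` T \<subseteq> T\<close>] by blast
  define \<sigma> where "\<sigma> x = (if x \<in> P then g x else x)" for x
  have "inj \<sigma>"
    unfolding \<sigma>_def using P T(1) by (intro inj_extend_by_id) (auto intro: finite_subset)
  have "L_coloring V E L (\<sigma> \<circ> c)"
    unfolding L_coloring_def
  proof (intro conjI ballI impI)
    fix v assume "v \<in> V"
    then have "v \<in> color_class (c v)" by (simp add: color_class_def)
    then show "(\<sigma> \<circ> c) v \<in> L v"
      using g P(1) color_in_list[OF \<open>v \<in> V\<close>] by (auto simp: \<sigma>_def class_recolorable_def)
  next
    fix u v assume "u \<in> V" "v \<in> V" "E u v"
    then have "c u \<noteq> c v" using coloring by (simp add: L_coloring_def)
    then show "(\<sigma> \<circ> c) u \<noteq> (\<sigma> \<circ> c) v" using \<open>inj \<sigma>\<close> by (simp add: inj_eq)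
  qed
  moreover obtain a where "a \<in> P" using P(2) by blast
  then obtain v where "v \<in> V" "c v = a" using P(1) T(3) by blast
  ultimately have "\<sigma> a = a" using unique[of "\<sigma> \<circ> c" v] by simp
  moreover have "g a \<noteq> a" using g \<open>a \<in> P\<close> P(1) by blast
  ultimately show False using \<open>a \<in> P\<close> by (simp add: \<sigma>_def)
qed

end

locale unique_k_list_coloring = unique_list_coloring +
  fixes k :: nat
  assumes k_lists: "k_list_assignment V L k"
begin

definition large_colors :: "nat set" where
  "large_colors = {a \<in> c ` V. 3 \<le> card (color_class a)}"

definition pair_colors :: "nat set" where
  "pair_colors = {a \<in> c ` V. card (color_class a) = 2}"

definition singleton_colors :: "nat set" where
  "singleton_colors = {a \<in> c ` V. card (color_class a) = 1}"

lemma finite_color_sets: "finite large_colors" "finite pair_colors" "finite singleton_colors"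
  using finite_vertices by (auto simp: large_colors_def pair_colors_def singleton_colors_def)

lemma used_colors_partition: "c ` V = large_colors \<union> pair_colors \<union> singleton_colors"
proof
  show "large_colors \<union> pair_colors \<union> singleton_colors \<subseteq> c ` V"
    unfolding large_colors_def pair_colors_def singleton_colors_def by blast
next
  show "c ` V \<subseteq> large_colors \<union> pair_colors \<union> singleton_colors"
  proof
    fix a assume a: "a \<in> c ` V"
    then have "card (color_class a) \<noteq> 0"
      using finite_color_class[of a] unfolding color_class_def by (auto simp: card_eq_0_iff)
    then have "3 \<le> card (color_class a) \<or> card (color_class a) = 2 \<or> card (color_class a) = 1"
      by presburger
    then show "a \<in> large_colors \<union> pair_colors \<union> singleton_colors"
      using a unfolding large_colors_def pair_colors_def singleton_colors_def by blast
  qed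
qed

lemma singleton_colorE:
  assumes "a \<in> singleton_colors"
  obtains v where "v \<in> V" "c v = a" "color_class a = {v}"
proof -
  obtain v where v: "color_class a = {v}"
    using assms unfolding singleton_colors_def by (auto simp: card_1_singleton_iff)
  moreover have "v \<in> V" "c v = a" using v unfolding color_class_def by auto
  ultimately show thesis using that by blast
qed

lemma pair_colorE:
  assumes "a \<in> pair_colors"
  obtains x y where "x \<in> V" "c x = a" "y \<in> V" "c y = a" "color_class a = {x, y}"
  using assms unfolding pair_colors_def card_2_iff color_class_def by blast

lemma card_vertices_lower_bound:
  "3 * card large_colors + 2 * card pair_colors + card singleton_colors \<le> card V"
proof -
  have disjoint: "large_colors \<inter> pair_colors = {}" "(large_colors \<union> pair_colors) \<inter> singleton_colors = {}"
    unfolding large_colors_def pair_colors_def singleton_colors_def by auto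
  have "V = (\<Union>a\<in>c ` V. color_class a)" unfolding color_class_def by blast
  then have "card V = card (\<Union>a\<in>c ` V. color_class a)" by (rule arg_cong)
  also have "\<dots> = (\<Sum>a\<in>c ` V. card (color_class a))"
    using finite_vertices finite_color_class by (intro card_UN_disjoint) (auto simp: color_class_def)
  also have "\<dots> = (\<Sum>a\<in>large_colors. card (color_class a)) + (\<Sum>a\<in>pair_colors. card (color_class a))
      + (\<Sum>a\<in>singleton_colors. card (color_class a))"
    unfolding used_colors_partition using finite_color_sets disjoint
    by (simp add: sum.union_disjoint)
  finally have "card V = \<dots>" .
  moreover have "3 * card large_colors \<le> (\<Sum>a\<in>large_colors. card (color_class a))"
    using sum_mono[of large_colors "\<lambda>_. 3" "\<lambda>a. card (color_class a)"]
    unfolding large_colors_def by simp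
  moreover have "(\<Sum>a\<in>pair_colors. card (color_class a)) = 2 * card pair_colors"
    unfolding pair_colors_def by simp
  moreover have "(\<Sum>a\<in>singleton_colors. card (color_class a)) = card singleton_colors"
    unfolding singleton_colors_def by simp
  ultimately show ?thesis by linarith
qed

lemma k_le_card_plus_one_if_list_subset:
  assumes "v \<in> V" "L v - {c v} \<subseteq> A" "finite A"
  shows "k \<le> card A + 1"
proof -
  have "card (L v) = k" "finite (L v)" using k_lists assms(1) by (auto simp: k_list_assignment_def)
  moreover have "c v \<in> L v" using color_in_list[OF assms(1)] .
  moreover have "card (L v) > 0" using \<open>finite (L v)\<close> \<open>c v \<in> L v\<close> card_gt_0_iff by blast
  ultimately have "card (L v - {c v}) + 1 = k" by (simp add: card_Diff_singleton)
  moreover have "card (L v - {c v}) \<le> card A" using assms(2,3) by (rule card_mono[rotated])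
  ultimately show ?thesis by simp
qed

lemma k_le_card_used_colors:
  assumes "v \<in> V" shows "k \<le> card (c ` V)"
proof -
  have "card (L v) = k" using k_lists assms by (simp add: k_list_assignment_def)
  then show ?thesis
    using card_mono[OF finite_imageI[OF finite_vertices] list_subset_used_colors[OF assms]] by simp
qed

lemma k_le_if_singleton_colors_nonempty:
  assumes "singleton_colors \<noteq> {}"
  shows "k \<le> card large_colors + card pair_colors + 1"
proof (rule ccontr)
  assume k_large: "\<not> ?thesis"
  have "singleton_colors \<subseteq> c ` V" unfolding singleton_colors_def by blast
  then obtain a where a: "a \<in> singleton_colors"
    and stuck: "\<forall>b\<in>singleton_colors. class_recolorable a b \<longrightarrow> b = a"
    using exists_unrecolorable_class[OF finite_color_sets(3) assms] by blast
  obtain v where v: "v \<in> V" "c v = a" "color_class a = {v}" using a by (rule singleton_colorE)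
  have "\<not> L v - {c v} \<subseteq> large_colors \<union> pair_colors"
  proof
    assume "L v - {c v} \<subseteq> large_colors \<union> pair_colors"
    then have "k \<le> card (large_colors \<union> pair_colors) + 1"
      using k_le_card_plus_one_if_list_subset[OF v(1)] finite_color_sets by blast
    then show False using k_large card_Un_le[of large_colors pair_colors] by linarith
  qed
  then obtain b where b: "b \<in> L v" "b \<noteq> a" "b \<notin> large_colors" "b \<notin> pair_colors"
    using v(2) by blast
  have "b \<in> singleton_colors"
    using b list_subset_used_colors[OF v(1)] used_colors_partition by blast
  moreover have "class_recolorable a b" using v(3) b(1) by (simp add: class_recolorable_def)
  ultimately show False using stuck b(2) by blast
qed

lemma k_le_if_unrecolorable_singleton:
  assumes a: "a \<in> singleton_colors"
    and stuck: "\<forall>b\<in>pair_colors \<union> singleton_colors. class_recolorable a b \<longrightarrow> b = a"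
  shows "k \<le> card large_colors + 1"
proof -
  obtain v where v: "v \<in> V" "c v = a" "color_class a = {v}" using a by (rule singleton_colorE)
  have "L v - {c v} \<subseteq> large_colors"
  proof
    fix b assume b: "b \<in> L v - {c v}"
    then have "b \<in> c ` V" using list_subset_used_colors[OF v(1)] by blast
    moreover have "class_recolorable a b" using v(3) b by (simp add: class_recolorable_def)
    ultimately show "b \<in> large_colors" using stuck b v(2) used_colors_partition by blast
  qed
  then show ?thesis using k_le_card_plus_one_if_list_subset[OF v(1)] finite_color_sets(1) by blast
qed

text \<open>The lists of the two vertices of class \<open>a\<close> meet the classes of size at most two in
  disjoint sets, since a common color would make \<open>a\<close> recolorable.\<close>
lemma k_le_if_unrecolorable_pair:
  assumes a: "a \<in> pair_colors"
    and stuck: "\<forall>b\<in>pair_colors \<union> singleton_colors. class_recolorable a b \<longrightarrow> b = a"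
  shows "2 * k \<le> 2 * card large_colors + card pair_colors + card singleton_colors + 1"
proof -
  obtain x y where xy: "x \<in> V" "c x = a" "y \<in> V" "c y = a" "color_class a = {x, y}"
    using a by (rule pair_colorE)
  define small where "small = pair_colors \<union> singleton_colors"
  define B where "B z = (L z - {a}) \<inter> small" for z
  have fin: "finite small" "\<And>z. finite (B z)"
    using finite_color_sets by (auto simp: small_def B_def)
  have bound: "k \<le> card (B z) + card large_colors + 1" if z: "z \<in> V" "c z = a" for z
  proof -
    have "L z - {c z} \<subseteq> B z \<union> large_colors"
      using list_subset_used_colors[OF z(1)] used_colors_partition z(2)
      unfolding B_def small_def by blast
    then have "k \<le> card (B z \<union> large_colors) + 1"
      using k_le_card_plus_one_if_list_subset[OF z(1)] fin(2) finite_color_sets(1) by blast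
    then show ?thesis using card_Un_le[of "B z" large_colors] by linarith
  qed
  have "B x \<inter> B y = {}"
  proof (rule ccontr)
    assume "B x \<inter> B y \<noteq> {}"
    then obtain b where "b \<in> B x" "b \<in> B y" by blast
    then have "class_recolorable a b" "b \<in> small" "b \<noteq> a"
      using xy(5) by (auto simp: class_recolorable_def B_def)
    then show False using stuck unfolding small_def by blast
  qed
  moreover have "insert a (B x \<union> B y) \<subseteq> small" "a \<notin> B x \<union> B y"
    using a by (auto simp: small_def B_def)
  ultimately have "card (B x) + card (B y) + 1 \<le> card small"
    using fin card_mono[OF fin(1)] by (metis card_Un_disjoint card_insert_disjoint finite_Un Suc_eq_plus1)
  moreover have "card small = card pair_colors + card singleton_colors"
    unfolding small_def using finite_color_sets
    by (intro card_Un_disjoint) (auto simp: pair_colors_def singleton_colors_def)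
  ultimately show ?thesis using bound[OF xy(1,2)] bound[OF xy(3,4)] by linarith
qed

lemma three_k_le_card_vertices_plus_two:
  assumes "V \<noteq> {}"
  shows "3 * k \<le> card V + 2"
proof (cases "pair_colors \<union> singleton_colors = {}")
  case True
  obtain v where "v \<in> V" using assms by blast
  then have "k \<le> card large_colors"
    using k_le_card_used_colors used_colors_partition True by simp
  then show ?thesis using card_vertices_lower_bound by linarith
next
  case False
  have "pair_colors \<union> singleton_colors \<subseteq> c ` V"
    unfolding pair_colors_def singleton_colors_def by blast
  then obtain a where a: "a \<in> pair_colors \<union> singleton_colors"
    and stuck: "\<forall>b\<in>pair_colors \<union> singleton_colors. class_recolorable a b \<longrightarrow> b = a"
    using exists_unrecolorable_class[OF _ False] finite_color_sets by blast
  show ?thesis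
  proof (cases "a \<in> singleton_colors")
    case True
    then have "card singleton_colors \<noteq> 0" using finite_color_sets(3) by auto
    then show ?thesis
      using k_le_if_unrecolorable_singleton[OF True stuck] card_vertices_lower_bound by linarith
  next
    case False
    then have "2 * k \<le> 2 * card large_colors + card pair_colors + card singleton_colors + 1"
      using a stuck k_le_if_unrecolorable_pair by blast
    moreover have "card singleton_colors = 0 \<or> k \<le> card large_colors + card pair_colors + 1"
      using k_le_if_singleton_colors_nonempty by (cases "singleton_colors = {}") simp_all
    ultimately show ?thesis using card_vertices_lower_bound by linarith
  qed
qed

end

lemma property_M_if_card_lt:
  assumes "simple_graph V E" "V \<noteq> {}" "card V + 2 < 3 * k"
  shows "property_M V E k"
  unfolding property_M_def UkLC_def unique_L_coloring_def
proof
  assume "\<exists>L. k_list_assignment V L k \<and>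
    (\<exists>c. L_coloring V E L c \<and> (\<forall>c'. L_coloring V E L c' \<longrightarrow> (\<forall>v\<in>V. c' v = c v)))"
  then obtain L c where "k_list_assignment V L k" "L_coloring V E L c"
    "\<forall>c'. L_coloring V E L c' \<longrightarrow> (\<forall>v\<in>V. c' v = c v)"
    by blast
  then interpret unique_k_list_coloring V E L c k
    using assms(1) by unfold_locales blast+
  show False using three_k_le_card_vertices_plus_two assms(2,3) by linarith
qed

theorem corollary2p3:
  fixes V :: "'a set" and E :: "'a \<Rightarrow> 'a \<Rightarrow> bool" and n :: nat
  assumes "simple_graph V E" and "card V = n" and "n \<ge> 1"
  shows "m_number V E \<le> nat \<lceil>real n / 3\<rceil> + 1"
proof -
  define K where "K = nat \<lceil>real n / 3\<rceil> + 1"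
  have "real n \<le> 3 * real (nat \<lceil>real n / 3\<rceil>)"
    using le_of_int_ceiling[of "real n / 3"] by linarith
  then have "card V + 2 < 3 * K" using assms(2) unfolding K_def by simp
  moreover have "V \<noteq> {}" using assms(2,3) by auto
  ultimately have "property_M V E K" using assms(1) by (intro property_M_if_card_lt)
  then have "m_number V E \<le> K" unfolding m_number_def by (intro Least_le) (simp add: K_def)
  then show ?thesis unfolding K_def .
qed

end
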